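(* Let $\theta>0$ and $m,k\in\mathbb{N}$. For $n\in\mathbb{N}$ let $a_1,\dots,a_n\in\mathbb{Z}_+\cap[0,m]$ and $h(\sigma)=\sum_{j\le n}a_jk_j(\sigma)$. Then \[ \mathbf{E}_n h(\sigma)_{(k)}=\sum_{u=1}^k\theta^u\sum_{\substack{r_1+\cdots+r_u=k\\ r_i\ge1}}\binom{k-1}{r_1-1}\cdots\binom{k-r_1-\cdots-r_{u-1}-1}{r_u-1}\sum_{\substack{j_1,\dots,j_u\ge1\\ j_1+\cdots+j_u<n}}\frac{(a_{j_1})_{(r_1)}\cdots(a_{j_u})_{(r_u)}}{j_1\cdots j_u}\Big(1-\frac{j_1+\cdots+j_u}{n}\Big)^{\theta-1}+O\Big(\frac{1+\log^k n}{n^{\min\{1,\theta\}}}\Big) \] for $n\ge1$, where the constant in $O(\cdot)$ depends only on $\theta$, $m$ and $k$.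
   Context: $\mathbf{S}_n$ is the symmetric group; $k_j(\sigma)$ is the number of cycles of length $j$ of $\sigma$ and $w(\sigma)$ its number of cycles. The Ewens measure is $\nu_n(A)=\frac{1}{\theta^{(n)}}\sum_{\sigma\in A}\theta^{w(\sigma)}$, $\theta^{(n)}=\theta(\theta+1)\cdots(\theta+n-1)$; $\mathbf{E}_n$ is expectation with respect to $\nu_n$. $x_{(r)}=x(x-1)\cdots(x-r+1)$. *)

theory Defs
  imports "HOL-Analysis.Analysis" "HOL-Combinatorics.Combinatorics"
begin

definition falling :: "real \<Rightarrow> nat \<Rightarrow> real" where
  "falling x r = (\<Prod>i<r. (x - real i))"

definition cycles_of :: "nat \<Rightarrow> (nat \<Rightarrow> nat) \<Rightarrow> nat set set" where
  "cycles_of n \<sigma> = (\<lambda>x. orbit \<sigma> x) ` {1..n}"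

definition cyc_count :: "nat \<Rightarrow> (nat \<Rightarrow> nat) \<Rightarrow> nat \<Rightarrow> nat" where
  "cyc_count n \<sigma> j = card {C \<in> cycles_of n \<sigma>. card C = j}"

definition num_cycles :: "nat \<Rightarrow> (nat \<Rightarrow> nat) \<Rightarrow> nat" where
  "num_cycles n \<sigma> = card (cycles_of n \<sigma>)"

definition ewens_E :: "real \<Rightarrow> nat \<Rightarrow> ((nat \<Rightarrow> nat) \<Rightarrow> real) \<Rightarrow> real" where
  "ewens_E \<theta> n f = (\<Sum>\<sigma>\<in>{\<sigma>. \<sigma> permutes {1..n}}. \<theta> ^ num_cycles n \<sigma> * f \<sigma>) / pochhammer \<theta> n"

definition compositions :: "nat \<Rightarrow> nat \<Rightarrow> nat list set" where
  "compositions k u = {r. length r = u \<and> (\<forall>x\<in>set r. 1 \<le> x) \<and> sum_list r = k}"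

definition index_tuples :: "nat \<Rightarrow> nat \<Rightarrow> nat list set" where
  "index_tuples n u = {js. length js = u \<and> (\<forall>x\<in>set js. 1 \<le> x) \<and> sum_list js < n}"

definition main_term :: "real \<Rightarrow> nat \<Rightarrow> (nat \<Rightarrow> nat) \<Rightarrow> nat \<Rightarrow> real" where
  "main_term \<theta> k a n =
    (\<Sum>u=1..k. \<theta> ^ u *
      (\<Sum>r\<in>compositions k u.
         real (\<Prod>i<u. (k - sum_list (take i r) - 1) choose (r ! i - 1)) *
         (\<Sum>js\<in>index_tuples n u.
            (\<Prod>i<u. falling (real (a (js ! i))) (r ! i) / real (js ! i)) *
            (1 - real (sum_list js) / real n) powr (\<theta> - 1))))"

end

theory Submission
  imports Defs "HOL-Analysis.Harmonic_Numbers"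
begin

text \<open>
  Both \<theta>^w(\<sigma>) and h(\<sigma>) = \<Sum>_j a_j k_j(\<sigma>) depend only on the cycle type of \<sigma>, and sums
  over S_n of functions of the cycle type obey a recursion in n: insert the point n into a
  permutation of {1..n-1}. It yields the marked-cycle identity: summing \<Psi>(j, type of \<sigma> minus
  one j-cycle) over all \<sigma> and all cycles of \<sigma> gives \<Sum>_j n!/((n-j)! j) times the corresponding
  sum over S_(n-j). Splitting off one cycle of h inside its falling factorial (Vandermonde) turns
  this into a recursion in k, which is solved exactly: E_n h(\<sigma>)_(k) equals the main term of the
  theorem with (1 - J/n)^(\<theta>-1) replaced by p(n - J)/p(n), where p(i) = \<theta>^(i)/i! and
  J = j_1 + ... + j_u now ranges up to n inclusive.

  Since ln p(i) - (\<theta> - 1) ln i converges at rate 1/i, p(n - J)/p(n) is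
  (1 - J/n)^(\<theta>-1) (1 + O(1/(n - J))) for J < n, and 1/p(n) = O(n^(1-\<theta>)). These errors are
  summed against the weights 1/(j_1 \<cdots> j_u), whose total over j_1 + ... + j_u = J is at most
  (2 (1 + ln J))^(u-1) / J, by induction on u from \<Sum>_(0<J<n) 1/(J (n - J)) \<le> 2 (1 + ln n)/n.
\<close>

section \<open>Cycle types of permutations\<close>

definition cycles_on :: "'a set \<Rightarrow> ('a \<Rightarrow> 'a) \<Rightarrow> 'a set set" where
  "cycles_on S \<sigma> = (\<lambda>x. orbit \<sigma> x) ` S"

definition cycle_type :: "'a set \<Rightarrow> ('a \<Rightarrow> 'a) \<Rightarrow> nat multiset" where
  "cycle_type S \<sigma> = image_mset card (mset_set (cycles_on S \<sigma>))"

lemma permutes_self_in_orbit: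
  assumes "\<sigma> permutes S" "finite S" shows "x \<in> orbit \<sigma> x"
  by (rule permutation_self_in_orbit) (use assms in \<open>auto simp: permutation_permutes\<close>)

lemma orbit_eq_if_in_orbit:
  assumes "permutation f" "y \<in> orbit f x" shows "orbit f y = orbit f x"
  by (rule orbit_cyclic_eq3[OF cyclic_on_orbit'[OF assms(1)] assms(2)])

lemma finite_cycles_on: "finite S \<Longrightarrow> finite (cycles_on S \<sigma>)"
  unfolding cycles_on_def by simp

lemma not_in_cycles_on:
  assumes "q permutes S" "a \<notin> S" "a \<in> C" shows "C \<notin> cycles_on S q"
  using assms permutes_orbit_subset unfolding cycles_on_def by fastforce

lemma cycles_on_insert_fixed:
  assumes "q permutes S" "a \<notin> S"
  shows "cycles_on (insert a S) q = insert {a} (cycles_on S q)"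
proof -
  have "q a = a" using assms permutes_not_in by metis
  then have "orbit q a = {a}" by (simp add: orbit_eq_singleton_iff)
  then show ?thesis unfolding cycles_on_def by simp
qed

lemma transpose_comp_apply:
  assumes "q permutes S" "a \<notin> S" "x \<in> S"
  shows "(Transposition.transpose a b \<circ> q) x = (if q x = b then a else q x)"
proof -
  have "q x \<noteq> a" using assms permutes_in_image by metis
  then show ?thesis by (simp add: Transposition.transpose_def)
qed

lemma permutes_transpose_comp:
  assumes "q permutes S" "b \<in> S"
  shows "Transposition.transpose a b \<circ> q permutes insert a S"
proof (rule permutes_compose)
  show "q permutes insert a S" using assms(1) by (rule permutes_subset) blast
  show "Transposition.transpose a b permutes insert a S" using assms(2) by (intro permutes_swap_id) auto
qed

text \<open>Composing with the transposition of a new point \<open>a\<close> and \<open>b \<in> S\<close> inserts \<open>a\<close>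
  into the cycle of \<open>b\<close>, just before \<open>b\<close>, and leaves all other cycles alone.\<close>

lemma orbit_subset_orbit_transpose_comp:
  assumes q: "q permutes S" and "finite S" "a \<notin> S" "b \<in> S"
  shows "insert a (orbit q b) \<subseteq> orbit (Transposition.transpose a b \<circ> q) a"
    (is "_ \<subseteq> orbit ?\<sigma> a")
proof -
  have b: "b \<in> orbit ?\<sigma> a"
    using q \<open>a \<notin> S\<close> permutes_not_in orbit.base[of ?\<sigma> a] by fastforce
  have "y \<in> orbit ?\<sigma> a" if "y \<in> orbit q b" for y
    using that
  proof induct
    case base
    show ?case
    proof (cases "q b = b")
      case False
      then have "?\<sigma> b = q b" using transpose_comp_apply[OF q \<open>a \<notin> S\<close> \<open>b \<in> S\<close>, where b=b] by simp
      then show ?thesis using orbit.step[OF b] by metis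
    qed (metis b)
  next
    case (step y)
    show ?case
    proof (cases "q y = b")
      case False
      have "y \<in> S" using step(1) permutes_orbit_subset[OF q \<open>b \<in> S\<close>] by blast
      then have "?\<sigma> y = q y" using False transpose_comp_apply[OF q \<open>a \<notin> S\<close>, where b=b] by simp
      then show ?thesis using orbit.step[OF step(2)] by metis
    qed (metis b)
  qed
  moreover have "a \<in> orbit ?\<sigma> a"
    using permutes_self_in_orbit[OF permutes_transpose_comp[OF q \<open>b \<in> S\<close>]] \<open>finite S\<close> by simp
  ultimately show ?thesis by blast
qed

lemma orbit_transpose_comp_subset:
  assumes q: "q permutes S" and "finite S" "a \<notin> S" "b \<in> S"
  shows "orbit (Transposition.transpose a b \<circ> q) a \<subseteq> insert a (orbit q b)"
proof
  have b: "b \<in> orbit q b" and "(Transposition.transpose a b \<circ> q) a = b"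
    using q \<open>a \<notin> S\<close> \<open>finite S\<close> permutes_not_in permutes_self_in_orbit by fastforce+
  fix y assume "y \<in> orbit (Transposition.transpose a b \<circ> q) a"
  then show "y \<in> insert a (orbit q b)"
  proof induct
    case base
    then show ?case using b \<open>(Transposition.transpose a b \<circ> q) a = b\<close> by simp
  next
    case (step y)
    show ?case
    proof (cases "y = a")
      case False
      then have y: "y \<in> orbit q b" using step(2) by simp
      then have "y \<in> S" using permutes_orbit_subset[OF q \<open>b \<in> S\<close>] by blast
      then show ?thesis
        using orbit.step[OF y] transpose_comp_apply[OF q \<open>a \<notin> S\<close>] by simp
    qed (use b \<open>(Transposition.transpose a b \<circ> q) a = b\<close> in simp)
  qed
qed

lemma orbit_transpose_comp_new:
  assumes "q permutes S" "finite S" "a \<notin> S" "b \<in> S"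
  shows "orbit (Transposition.transpose a b \<circ> q) a = insert a (orbit q b)"
  using orbit_transpose_comp_subset[OF assms] orbit_subset_orbit_transpose_comp[OF assms] by (rule equalityI)

lemma orbit_transpose_comp_other:
  assumes q: "q permutes S" and "finite S" "a \<notin> S" "b \<in> S" "y \<in> S" "y \<notin> orbit q b"
  shows "orbit (Transposition.transpose a b \<circ> q) y = orbit q y"
proof (rule orbit_cong)
  have pq: "permutation q" using q \<open>finite S\<close> by (auto simp: permutation_permutes)
  show "y \<in> orbit q y" by (rule permutes_self_in_orbit[OF q \<open>finite S\<close>])
  fix s assume s: "s \<in> orbit q y"
  have "s \<in> S" using s permutes_orbit_subset[OF q \<open>y \<in> S\<close>] by blast
  moreover have "q s \<noteq> b"
  proof
    assume "q s = b"
    then have "b \<in> orbit q y" using s orbit.step by metis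
    then have "orbit q b = orbit q y" by (rule orbit_eq_if_in_orbit[OF pq])
    then show False
      using \<open>y \<notin> orbit q b\<close> permutes_self_in_orbit[OF q \<open>finite S\<close>] by blast
  qed
  ultimately show "(Transposition.transpose a b \<circ> q) s = q s"
    using transpose_comp_apply[OF q \<open>a \<notin> S\<close>] by simp
qed

lemma cycles_on_insert_transpose:
  assumes q: "q permutes S" and fS: "finite S" and aS: "a \<notin> S" and bS: "b \<in> S"
  shows "cycles_on (insert a S) (Transposition.transpose a b \<circ> q)
           = insert (insert a (orbit q b)) (cycles_on S q - {orbit q b})"
    (is "cycles_on _ ?\<sigma> = _")
proof (rule set_eqI, rule iffI)
  have pq: "permutation q" using q fS by (auto simp: permutation_permutes)
  have pr: "permutation ?\<sigma>"
    using permutes_transpose_comp[OF q bS] fS by (auto simp: permutation_permutes)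
  fix C assume "C \<in> cycles_on (insert a S) ?\<sigma>"
  then obtain y where y: "y \<in> insert a S" "C = orbit ?\<sigma> y" unfolding cycles_on_def by auto
  show "C \<in> insert (insert a (orbit q b)) (cycles_on S q - {orbit q b})"
  proof (cases "y \<in> insert a (orbit q b)")
    case True
    then have "y \<in> orbit ?\<sigma> a" using orbit_transpose_comp_new[OF assms] by simp
    then have "C = orbit ?\<sigma> a" using y orbit_eq_if_in_orbit[OF pr] by simp
    then show ?thesis using orbit_transpose_comp_new[OF assms] by simp
  next
    case False
    then have "y \<in> S" "y \<notin> orbit q b" using y by auto
    moreover from this have "orbit q y \<noteq> orbit q b"
      using permutes_self_in_orbit[OF q fS, of y] by auto
    ultimately show ?thesis
      using y orbit_transpose_comp_other[OF assms] unfolding cycles_on_def by auto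
  qed
next
  have pq: "permutation q" using q fS by (auto simp: permutation_permutes)
  fix C assume C: "C \<in> insert (insert a (orbit q b)) (cycles_on S q - {orbit q b})"
  show "C \<in> cycles_on (insert a S) ?\<sigma>"
  proof (cases "C = insert a (orbit q b)")
    case True
    then show ?thesis
      using orbit_transpose_comp_new[OF assms] unfolding cycles_on_def by (auto intro: image_eqI[of _ _ a])
  next
    case False
    then obtain y where y: "y \<in> S" "C = orbit q y" "C \<noteq> orbit q b"
      using C unfolding cycles_on_def by auto
    then have "y \<notin> orbit q b" using orbit_eq_if_in_orbit[OF pq, of y b] by auto
    then have "C = orbit ?\<sigma> y" using y orbit_transpose_comp_other[OF assms] by simp
    then show ?thesis using y(1) unfolding cycles_on_def by blast
  qed
qed

lemma cycle_type_insert_fixed: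
  assumes "q permutes S" "finite S" "a \<notin> S"
  shows "cycle_type (insert a S) q = add_mset 1 (cycle_type S q)"
  using assms cycles_on_insert_fixed[OF assms(1,3)] not_in_cycles_on[OF assms(1,3), of "{a}"]
    finite_cycles_on[OF assms(2)]
  unfolding cycle_type_def by simp

lemma cycle_type_insert_transpose:
  assumes q: "q permutes S" and fS: "finite S" and aS: "a \<notin> S" and bS: "b \<in> S"
  shows "cycle_type (insert a S) (Transposition.transpose a b \<circ> q) =
     add_mset (Suc (card (orbit q b))) (cycle_type S q - {#card (orbit q b)#})"
proof -
  let ?O = "orbit q b"
  have "?O \<subseteq> S" by (rule permutes_orbit_subset[OF q bS])
  then have fO: "finite ?O" and aO: "a \<notin> ?O" using fS aS finite_subset by auto
  have in1: "?O \<in> cycles_on S q" unfolding cycles_on_def using bS by simp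
  have fc: "finite (cycles_on S q)" by (rule finite_cycles_on[OF fS])
  have "insert a ?O \<notin> cycles_on S q" by (rule not_in_cycles_on[OF q aS]) simp
  then have e: "mset_set (cycles_on (insert a S) (Transposition.transpose a b \<circ> q)) =
        add_mset (insert a ?O) (mset_set (cycles_on S q) - {#?O#})"
    unfolding cycles_on_insert_transpose[OF assms] using fc in1 by (simp add: mset_set_Diff)
  have sub: "{#?O#} \<subseteq># mset_set (cycles_on S q)" using in1 fc by simp
  show ?thesis unfolding cycle_type_def e using image_mset_Diff[OF sub, of card] fO aO by simp
qed

lemma sum_card_orbit_eq_sum_cycle_type:
  assumes q: "q permutes S" and fS: "finite S"
  shows "(\<Sum>b\<in>S. g (card (orbit q b))) = (\<Sum>j\<in>#cycle_type S q. real j * g j)"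
proof -
  have pq: "permutation q" using q fS by (auto simp: permutation_permutes)
  have C: "{x \<in> S. orbit q x = C} = C" if "C \<in> cycles_on S q" for C
  proof -
    obtain y where y: "y \<in> S" "C = orbit q y" using \<open>C \<in> cycles_on S q\<close> unfolding cycles_on_def by auto
    then have "C \<subseteq> S" using permutes_orbit_subset[OF q] by simp
    then show ?thesis
      using y orbit_eq_if_in_orbit[OF pq, of _ y] permutes_self_in_orbit[OF q fS] by blast
  qed
  have "(\<Sum>b\<in>S. g (card (orbit q b))) =
     (\<Sum>C\<in>cycles_on S q. \<Sum>b\<in>{x \<in> S. orbit q x = C}. g (card (orbit q b)))"
    unfolding cycles_on_def by (rule sum.image_gen[OF fS])
  also have "\<dots> = (\<Sum>C\<in>cycles_on S q. real (card C) * g (card C))"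
  proof (rule sum.cong[OF refl])
    fix C assume "C \<in> cycles_on S q"
    then have "(\<Sum>b\<in>{x \<in> S. orbit q x = C}. g (card (orbit q b))) = (\<Sum>b\<in>C. g (card C))"
      using C[of C] by (intro sum.cong) auto
    then show "(\<Sum>b\<in>{x \<in> S. orbit q x = C}. g (card (orbit q b))) = real (card C) * g (card C)"
      by simp
  qed
  also have "\<dots> = (\<Sum>j\<in>#cycle_type S q. real j * g j)"
    unfolding cycle_type_def sum_unfold_sum_mset by (simp add: multiset.map_comp comp_def)
  finally show ?thesis .
qed

lemma sum_mset_cycle_type:
  assumes "q permutes S" "finite S"
  shows "sum_mset (cycle_type S q) = card S"
  using sum_card_orbit_eq_sum_cycle_type[OF assms, of "\<lambda>_. 1"]
  by (simp flip: of_nat_sum_mset)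

lemma count_cycle_type:
  "finite S \<Longrightarrow> count (cycle_type S \<sigma>) j = card {C \<in> cycles_on S \<sigma>. card C = j}"
  unfolding cycle_type_def using finite_cycles_on[of S \<sigma>]
  by (simp add: count_image_mset' eq_commute)

lemma set_cycle_type_subset:
  assumes "\<sigma> permutes {1..n}"
  shows "set_mset (cycle_type {1..n} \<sigma>) \<subseteq> {1..n}"
proof
  fix j assume "j \<in># cycle_type {1..n} \<sigma>"
  then obtain x where x: "x \<in> {1..n}" "j = card (orbit \<sigma> x)"
    unfolding cycle_type_def cycles_on_def using finite_cycles_on by auto
  have sub: "orbit \<sigma> x \<subseteq> {1..n}" by (rule permutes_orbit_subset[OF assms x(1)])
  then have "card (orbit \<sigma> x) \<le> n" using card_mono[OF _ sub] by simp
  moreover have "x \<in> orbit \<sigma> x" using permutes_self_in_orbit[OF assms] by simp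
  then have "card (orbit \<sigma> x) \<ge> 1"
    using finite_subset[OF sub] by (auto simp: Suc_le_eq card_gt_0_iff)
  ultimately show "j \<in> {1..n}" using x by simp
qed

section \<open>Sums over the symmetric group by cycle type\<close>

definition cycle_type_sum :: "nat \<Rightarrow> (nat multiset \<Rightarrow> real) \<Rightarrow> real" where
  "cycle_type_sum n G = (\<Sum>\<sigma>\<in>{\<sigma>. \<sigma> permutes {1..n}}. G (cycle_type {1..n} \<sigma>))"

text \<open>The point \<open>n + 1\<close> enters a permutation of \<open>{1..n}\<close> either as a fixed point or just
  before one of the \<open>j\<close> points of a \<open>j\<close>-cycle.\<close>

definition insertion_op :: "(nat multiset \<Rightarrow> real) \<Rightarrow> nat multiset \<Rightarrow> real" where
  "insertion_op G \<mu> = G (add_mset 1 \<mu>) + (\<Sum>j\<in>#\<mu>. real j * G (add_mset (Suc j) (\<mu> - {#j#})))"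

lemma cycle_type_sum_0: "cycle_type_sum 0 G = G {#}"
proof -
  have "{\<sigma>. \<sigma> permutes ({}::nat set)} = {id}" by (auto simp: permutes_empty)
  moreover have "cycles_on {} (id :: nat \<Rightarrow> nat) = {}" unfolding cycles_on_def by simp
  ultimately show ?thesis unfolding cycle_type_sum_def cycle_type_def by simp
qed

lemma cycle_type_sum_Suc: "cycle_type_sum (Suc n) G = cycle_type_sum n (insertion_op G)"
proof -
  let ?S = "{1..n}" and ?P = "{p. p permutes {1..n}}"
  let ?G = "\<lambda>q j. G (add_mset (Suc j) (cycle_type ?S q - {#j#}))"
  have fS: "finite ?S" and aS: "Suc n \<notin> ?S" by simp_all
  have S: "{1..Suc n} = insert (Suc n) ?S" by (rule atLeastAtMostSuc_conv) simp
  have "cycle_type_sum (Suc n) G =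
      (\<Sum>b\<in>insert (Suc n) ?S. \<Sum>q\<in>?P. G (cycle_type (insert (Suc n) ?S) (Transposition.transpose (Suc n) b \<circ> q)))"
    unfolding cycle_type_sum_def S
    by (rule sum_over_permutations_insert[OF fS aS])
  also have "\<dots> = (\<Sum>q\<in>?P. G (add_mset 1 (cycle_type ?S q))) + (\<Sum>b\<in>?S. \<Sum>q\<in>?P. ?G q (card (orbit q b)))"
    using fS aS by (simp add: cycle_type_insert_fixed cycle_type_insert_transpose)
  also have "(\<Sum>b\<in>?S. \<Sum>q\<in>?P. ?G q (card (orbit q b))) = (\<Sum>q\<in>?P. \<Sum>b\<in>?S. ?G q (card (orbit q b)))"
    by (rule sum.swap)
  also have "\<dots> = (\<Sum>q\<in>?P. \<Sum>j\<in>#cycle_type ?S q. real j * ?G q j)"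
    using sum_card_orbit_eq_sum_cycle_type[OF _ fS] by (intro sum.cong) auto
  finally show ?thesis unfolding cycle_type_sum_def insertion_op_def by (simp add: sum.distrib)
qed

lemma cycle_type_sum_add: "cycle_type_sum n (\<lambda>\<mu>. f \<mu> + g \<mu>) = cycle_type_sum n f + cycle_type_sum n g"
  unfolding cycle_type_sum_def by (simp add: sum.distrib)

lemma cycle_type_sum_cmult: "cycle_type_sum n (\<lambda>\<mu>. c * f \<mu>) = c * cycle_type_sum n f"
  unfolding cycle_type_sum_def by (simp add: sum_distrib_left)

lemma cycle_type_sum_sum: "cycle_type_sum n (\<lambda>\<mu>. \<Sum>x\<in>A. f x \<mu>) = (\<Sum>x\<in>A. cycle_type_sum n (f x))"
  unfolding cycle_type_sum_def by (rule sum.swap)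

lemma cycle_type_sum_mult_sum_mset:
  "cycle_type_sum n (\<lambda>\<mu>. real (sum_mset \<mu>) * G \<mu>) = real n * cycle_type_sum n G"
  unfolding cycle_type_sum_def sum_distrib_left by (intro sum.cong) (simp_all add: sum_mset_cycle_type)

lemma cycle_type_sum_pochhammer: "cycle_type_sum n (\<lambda>\<mu>. \<theta> ^ size \<mu>) = pochhammer \<theta> n"
proof (induction n)
  case 0
  then show ?case by (simp add: cycle_type_sum_0)
next
  case (Suc n)
  have "insertion_op (\<lambda>\<mu>. \<theta> ^ size \<mu>) = (\<lambda>\<mu>. \<theta> * \<theta> ^ size \<mu> + real (sum_mset \<mu>) * \<theta> ^ size \<mu>)"
  proof
    fix \<mu> :: "nat multiset"
    have "(\<Sum>j\<in>#\<mu>. real j * \<theta> ^ size (add_mset (Suc j) (\<mu> - {#j#}))) = (\<Sum>j\<in>#\<mu>. real j * \<theta> ^ size \<mu>)"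
      by (intro arg_cong[where f=sum_mset] image_mset_cong) (metis insert_DiffM size_add_mset)
    then show "insertion_op (\<lambda>\<mu>. \<theta> ^ size \<mu>) \<mu> = \<theta> * \<theta> ^ size \<mu> + real (sum_mset \<mu>) * \<theta> ^ size \<mu>"
      unfolding insertion_op_def by (simp add: sum_mset_distrib_right of_nat_sum_mset)
  qed
  then have "cycle_type_sum (Suc n) (\<lambda>\<mu>. \<theta> ^ size \<mu>) = (\<theta> + real n) * cycle_type_sum n (\<lambda>\<mu>. \<theta> ^ size \<mu>)"
    by (simp only: cycle_type_sum_Suc cycle_type_sum_add cycle_type_sum_cmult
        cycle_type_sum_mult_sum_mset distrib_right)
  then show ?case using Suc.IH by (simp add: pochhammer_Suc mult.commute)
qed

lemma sum_mset_remove_add_mset: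
  "(\<Sum>j\<in># add_mset x \<nu>. \<Psi> j (add_mset x \<nu> - {#j#})) = \<Psi> x \<nu> + (\<Sum>j\<in>#\<nu>. \<Psi> j (add_mset x (\<nu> - {#j#})))"
proof -
  have "(\<Sum>j\<in>#\<nu>. \<Psi> j (add_mset x \<nu> - {#j#})) = (\<Sum>j\<in>#\<nu>. \<Psi> j (add_mset x (\<nu> - {#j#})))"
    by (intro arg_cong[where f=sum_mset] image_mset_cong) simp
  then show ?thesis by simp
qed

lemma sum_mset_remove_swap:
  "(\<Sum>i\<in>#M. \<Sum>j\<in>#M - {#i#}. F i j) = (\<Sum>j\<in>#M. \<Sum>i\<in>#M - {#j#}. F i j)"
proof (induction M)
  case (add x N)
  have "(\<Sum>i\<in>#N. \<Sum>j\<in>#add_mset x N - {#i#}. F i j) = (\<Sum>i\<in>#N. F i x + (\<Sum>j\<in>#N - {#i#}. F i j))"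
    and "(\<Sum>j\<in>#N. \<Sum>i\<in>#add_mset x N - {#j#}. F i j) = (\<Sum>j\<in>#N. F x j + (\<Sum>i\<in>#N - {#j#}. F i j))"
    by (intro arg_cong[where f=sum_mset] image_mset_cong; simp)+
  then show ?case using add.IH by (simp add: sum_mset.distrib ac_simps)
qed simp

lemma insertion_op_sum_remove:
  "insertion_op (\<lambda>\<mu>. \<Sum>j\<in>#\<mu>. \<Psi> j (\<mu> - {#j#})) \<mu> =
     \<Psi> 1 \<mu> + (\<Sum>i\<in>#\<mu>. real i * \<Psi> (Suc i) (\<mu> - {#i#})) + (\<Sum>j\<in>#\<mu>. insertion_op (\<Psi> j) (\<mu> - {#j#}))"
proof -
  let ?F = "\<lambda>i j. real i * \<Psi> j (add_mset (Suc i) (\<mu> - {#i#} - {#j#}))"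
  have "(\<Sum>i\<in>#\<mu>. real i * (\<Sum>j\<in># add_mset (Suc i) (\<mu> - {#i#}). \<Psi> j (add_mset (Suc i) (\<mu> - {#i#}) - {#j#})))
      = (\<Sum>i\<in>#\<mu>. real i * \<Psi> (Suc i) (\<mu> - {#i#}) + (\<Sum>j\<in>#\<mu> - {#i#}. ?F i j))"
    by (intro arg_cong[where f=sum_mset] image_mset_cong)
      (simp only: sum_mset_remove_add_mset distrib_left sum_mset_distrib_left)
  moreover have "(\<Sum>j\<in>#\<mu>. insertion_op (\<Psi> j) (\<mu> - {#j#})) =
      (\<Sum>j\<in>#\<mu>. \<Psi> j (add_mset 1 (\<mu> - {#j#})) + (\<Sum>i\<in>#\<mu> - {#j#}. ?F i j))"
    by (intro arg_cong[where f=sum_mset] image_mset_cong) (simp only: insertion_op_def diff_right_commute)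
  ultimately show ?thesis
    unfolding insertion_op_def sum_mset_remove_add_mset
    by (simp only: sum_mset.distrib sum_mset_remove_swap[where M=\<mu> and F="?F"] add.assoc add.left_commute)
qed

definition num_j_cycles :: "nat \<Rightarrow> nat \<Rightarrow> real" where
  "num_j_cycles n j = fact n / (fact (n - j) * real j)"

lemma num_j_cycles_Suc:
  assumes "1 \<le> j" "j \<le> n"
  shows "num_j_cycles (Suc n) j = fact n / fact (Suc n - j) + num_j_cycles n j"
proof -
  obtain m where m: "n = j + m" using assms(2) le_Suc_ex by blast
  define F M where "F = (fact n :: real)" and "M = (fact m :: real)"
  have "M \<noteq> 0" "real j \<noteq> 0" "real m + 1 \<noteq> 0" using assms by (simp_all add: M_def)
  then have "F / ((real m + 1) * M) = F * real j / ((real m + 1) * M * real j)"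
    and "F / (M * real j) = F * (real m + 1) / ((real m + 1) * M * real j)"
    by simp_all
  then have "F * (real j + real m + 1) / ((real m + 1) * M * real j) = F / ((real m + 1) * M) + F / (M * real j)"
    by (simp only: add_divide_distrib[symmetric]) (simp add: algebra_simps)
  moreover have "Suc n - j = Suc m" "n - j = m" "fact (Suc m) = (real m + 1) * M"
    "fact (Suc n) = (real j + real m + 1) * F"
    by (simp_all add: m M_def F_def algebra_simps)
  ultimately show ?thesis unfolding num_j_cycles_def F_def by (simp add: ac_simps)
qed

lemma num_j_cycles_mult: "1 \<le> j \<Longrightarrow> num_j_cycles n j * real j = fact n / fact (n - j)"
  unfolding num_j_cycles_def by simp

lemma num_j_cycles_diag: "num_j_cycles (Suc n) (Suc n) = fact n"
  unfolding num_j_cycles_def by (simp add: fact_Suc del: of_nat_Suc)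

lemma sum_num_j_cycles_Suc:
  fixes A :: "nat \<Rightarrow> real"
  shows "A 1 + (\<Sum>j=1..n. num_j_cycles n j * (real j * A (Suc j))) + (\<Sum>j=1..n. num_j_cycles n j * A j)
       = (\<Sum>j=1..Suc n. num_j_cycles (Suc n) j * A j)"
proof -
  have "A 1 + (\<Sum>j=1..n. num_j_cycles n j * (real j * A (Suc j)))
      = A 1 + (\<Sum>j=1..n. fact n / fact (Suc n - Suc j) * A (Suc j))"
    by (simp add: num_j_cycles_mult flip: mult.assoc)
  also have "\<dots> = A 1 + (\<Sum>j=Suc 1..Suc n. fact n / fact (Suc n - j) * A j)"
    by (subst sum.shift_bounds_cl_Suc_ivl) simp
  also have "\<dots> = (\<Sum>j=1..Suc n. fact n / fact (Suc n - j) * A j)"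
    by (subst sum.atLeast_Suc_atMost[of 1]) simp_all
  also have "\<dots> = (\<Sum>j=1..n. fact n / fact (Suc n - j) * A j) + fact n * A (Suc n)"
    by (simp add: sum.cl_ivl_Suc)
  finally have "A 1 + (\<Sum>j=1..n. num_j_cycles n j * (real j * A (Suc j))) + (\<Sum>j=1..n. num_j_cycles n j * A j)
      = (\<Sum>j=1..n. (fact n / fact (Suc n - j) + num_j_cycles n j) * A j) + fact n * A (Suc n)"
    by (simp add: sum.distrib distrib_right)
  also have "\<dots> = (\<Sum>j=1..Suc n. num_j_cycles (Suc n) j * A j)"
    by (simp add: num_j_cycles_Suc num_j_cycles_diag sum.cl_ivl_Suc)
  finally show ?thesis .
qed

text \<open>Combinatorially: a permutation of \<open>{1..n}\<close> with a marked \<open>j\<close>-cycle is a choice of one of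
  the \<open>num_j_cycles n j\<close> cycles of length \<open>j\<close> together with a permutation of the remaining
  \<open>n - j\<close> points.\<close>

lemma cycle_type_sum_marked_cycle:
  "cycle_type_sum n (\<lambda>\<mu>. \<Sum>j\<in>#\<mu>. \<Psi> j (\<mu> - {#j#})) = (\<Sum>j=1..n. num_j_cycles n j * cycle_type_sum (n - j) (\<Psi> j))"
proof (induction n arbitrary: \<Psi>)
  case 0
  then show ?case by (simp add: cycle_type_sum_0)
next
  case (Suc n)
  let ?\<Phi> = "\<lambda>i \<nu>. real i * \<Psi> (Suc i) \<nu>"
  have "cycle_type_sum (Suc n) (\<lambda>\<mu>. \<Sum>j\<in>#\<mu>. \<Psi> j (\<mu> - {#j#})) =
     cycle_type_sum n (\<Psi> 1) + cycle_type_sum n (\<lambda>\<mu>. \<Sum>i\<in>#\<mu>. ?\<Phi> i (\<mu> - {#i#}))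
      + cycle_type_sum n (\<lambda>\<mu>. \<Sum>j\<in>#\<mu>. insertion_op (\<Psi> j) (\<mu> - {#j#}))"
    unfolding cycle_type_sum_Suc insertion_op_sum_remove[abs_def] by (simp only: cycle_type_sum_add)
  also have "\<dots> = cycle_type_sum n (\<Psi> 1)
      + (\<Sum>j=1..n. num_j_cycles n j * (real j * cycle_type_sum (Suc n - Suc j) (\<Psi> (Suc j))))
      + (\<Sum>j=1..n. num_j_cycles n j * cycle_type_sum (Suc n - j) (\<Psi> j))"
    unfolding Suc.IH[of ?\<Phi>] Suc.IH[of "\<lambda>j. insertion_op (\<Psi> j)"] cycle_type_sum_cmult
    by (auto simp: Suc_diff_le cycle_type_sum_Suc intro!: sum.cong)
  also have "\<dots> = (\<Sum>j=1..Suc n. num_j_cycles (Suc n) j * cycle_type_sum (Suc n - j) (\<Psi> j))"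
    using sum_num_j_cycles_Suc[of "\<lambda>j. cycle_type_sum (Suc n - j) (\<Psi> j)" n] by simp
  finally show ?case .
qed

section \<open>Falling factorial moments of additive cycle functionals\<close>

lemma falling_0 [simp]: "falling x 0 = 1"
  unfolding falling_def by simp

lemma falling_Suc: "falling x (Suc k) = x * falling (x - 1) k"
  unfolding falling_def prod.lessThan_Suc_shift by (simp add: algebra_simps)

lemma falling_eq_fact_gbinomial: "falling x k = fact k * (x gchoose k)"
  unfolding falling_def gbinomial_prod_rev by (simp add: atLeast0LessThan)

lemma falling_add:
  "falling (x + y) K = (\<Sum>i=0..K. real (K choose i) * falling x i * falling y (K - i))"
  unfolding falling_eq_fact_gbinomial gbinomial_Vandermonde[symmetric] sum_distrib_left
  by (intro sum.cong refl) (simp add: binomial_fact field_simps)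

lemma mult_falling_add:
  "x * falling (x - 1 + y) K = (\<Sum>r=1..Suc K. real (K choose (r - 1)) * falling x r * falling y (Suc K - r))"
proof -
  have "x * falling (x - 1 + y) K = (\<Sum>i=0..K. real (K choose i) * falling x (Suc i) * falling y (K - i))"
    unfolding falling_add sum_distrib_left falling_Suc by (simp add: algebra_simps)
  also have "\<dots> = (\<Sum>r=Suc 0..Suc K. real (K choose (r - 1)) * falling x r * falling y (Suc K - r))"
    by (subst sum.shift_bounds_cl_Suc_ivl) simp
  finally show ?thesis by simp
qed

definition cycle_sum :: "(nat \<Rightarrow> nat) \<Rightarrow> nat multiset \<Rightarrow> real" where
  "cycle_sum a \<mu> = (\<Sum>j\<in>#\<mu>. real (a j))"

definition ewens_falling :: "real \<Rightarrow> (nat \<Rightarrow> nat) \<Rightarrow> nat \<Rightarrow> nat multiset \<Rightarrow> real" where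
  "ewens_falling \<theta> a k \<mu> = \<theta> ^ size \<mu> * falling (cycle_sum a \<mu>) k"

lemma cycle_sum_remove: "j \<in># \<mu> \<Longrightarrow> cycle_sum a \<mu> = real (a j) + cycle_sum a (\<mu> - {#j#})"
  unfolding cycle_sum_def by (metis insert_DiffM sum_mset.insert)

lemma falling_cycle_sum_Suc:
  "falling (cycle_sum a \<mu>) (Suc K) = (\<Sum>j\<in>#\<mu>. \<Sum>r=1..Suc K.
     real (K choose (r - 1)) * falling (real (a j)) r * falling (cycle_sum a (\<mu> - {#j#})) (Suc K - r))"
proof -
  have "falling (cycle_sum a \<mu>) (Suc K) = (\<Sum>j\<in>#\<mu>. real (a j) * falling (cycle_sum a \<mu> - 1) K)"
    unfolding falling_Suc cycle_sum_def by (simp add: sum_mset_distrib_right)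
  also have "\<dots> = (\<Sum>j\<in>#\<mu>. real (a j) * falling (real (a j) - 1 + cycle_sum a (\<mu> - {#j#})) K)"
    by (intro arg_cong[where f=sum_mset] image_mset_cong) (simp add: cycle_sum_remove[of _ \<mu> a] algebra_simps)
  finally show ?thesis by (simp only: mult_falling_add)
qed

text \<open>The factor \<open>1 / n!\<close> turns \<open>num_j_cycles n j\<close> into \<open>1 / (j (n - j)!)\<close>, which is absorbed
  into \<open>scaled_moment\<close> at \<open>n - j\<close>.\<close>

definition scaled_moment :: "real \<Rightarrow> (nat \<Rightarrow> nat) \<Rightarrow> nat \<Rightarrow> nat \<Rightarrow> real" where
  "scaled_moment \<theta> a n k = cycle_type_sum n (ewens_falling \<theta> a k) / fact n"

lemma scaled_moment_0: "scaled_moment \<theta> a n 0 = pochhammer \<theta> n / fact n"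
  unfolding scaled_moment_def ewens_falling_def by (simp add: cycle_type_sum_pochhammer)

lemma scaled_moment_Suc:
  "scaled_moment \<theta> a n (Suc K) = (\<Sum>j=1..n. \<Sum>r=1..Suc K.
     \<theta> * real (K choose (r - 1)) * falling (real (a j)) r / real j * scaled_moment \<theta> a (n - j) (Suc K - r))"
proof -
  let ?\<Psi> = "\<lambda>j \<nu>. \<Sum>r=1..Suc K. \<theta> * real (K choose (r - 1)) * falling (real (a j)) r * ewens_falling \<theta> a (Suc K - r) \<nu>"
  have "ewens_falling \<theta> a (Suc K) = (\<lambda>\<mu>. \<Sum>j\<in>#\<mu>. ?\<Psi> j (\<mu> - {#j#}))"
  proof
    fix \<mu>
    have "\<theta> ^ size \<mu> * (\<Sum>r=1..Suc K. real (K choose (r - 1)) * falling (real (a j)) r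
        * falling (cycle_sum a (\<mu> - {#j#})) (Suc K - r)) = ?\<Psi> j (\<mu> - {#j#})" if "j \<in># \<mu>" for j
    proof -
      have "size \<mu> = Suc (size (\<mu> - {#j#}))" using that by (metis insert_DiffM size_add_mset)
      then show ?thesis unfolding ewens_falling_def by (simp add: sum_distrib_left algebra_simps)
    qed
    then show "ewens_falling \<theta> a (Suc K) \<mu> = (\<Sum>j\<in>#\<mu>. ?\<Psi> j (\<mu> - {#j#}))"
      unfolding ewens_falling_def falling_cycle_sum_Suc sum_mset_distrib_left
      by (intro arg_cong[where f=sum_mset] image_mset_cong) simp
  qed
  then have "cycle_type_sum n (ewens_falling \<theta> a (Suc K)) = (\<Sum>j=1..n. num_j_cycles n j * cycle_type_sum (n - j) (?\<Psi> j))"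
    using cycle_type_sum_marked_cycle[where \<Psi>="?\<Psi>"] by simp
  also have "\<dots> = (\<Sum>j=1..n. num_j_cycles n j * (\<Sum>r=1..Suc K. \<theta> * real (K choose (r - 1)) * falling (real (a j)) r
         * cycle_type_sum (n - j) (ewens_falling \<theta> a (Suc K - r))))"
    by (simp only: cycle_type_sum_cmult cycle_type_sum_sum)
  finally have sum_eq: "cycle_type_sum n (ewens_falling \<theta> a (Suc K)) = \<dots>" .
  show ?thesis
    unfolding scaled_moment_def sum_eq sum_divide_distrib sum_distrib_left num_j_cycles_def
    by (intro sum.cong refl) (simp add: field_simps)
qed

lemma sum_count_eq_cycle_sum:
  assumes "finite A" "set_mset \<mu> \<subseteq> A"
  shows "(\<Sum>j\<in>A. real (a j) * real (count \<mu> j)) = cycle_sum a \<mu>"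
  using assms(2)
proof (induction \<mu>)
  case (add x \<mu>)
  have "(\<Sum>j\<in>A. real (a j) * real (count (add_mset x \<mu>) j)) =
     (\<Sum>j\<in>A. real (a j) * real (count \<mu> j)) + (\<Sum>j\<in>A. if j = x then real (a j) else 0)"
    unfolding sum.distrib[symmetric] by (rule sum.cong) (auto simp: algebra_simps)
  also have "(\<Sum>j\<in>A. if j = x then real (a j) else 0) = real (a x)"
    using add.prems assms(1) by (simp add: sum.delta)
  finally show ?case using add by (simp add: cycle_sum_def)
qed (simp add: cycle_sum_def)

lemma ewens_E_falling_eq:
  "ewens_E \<theta> n (\<lambda>\<sigma>. falling (real (\<Sum>j=1..n. a j * cyc_count n \<sigma> j)) k)
     = cycle_type_sum n (ewens_falling \<theta> a k) / pochhammer \<theta> n"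
proof -
  have "\<theta> ^ num_cycles n \<sigma> * falling (real (\<Sum>j=1..n. a j * cyc_count n \<sigma> j)) k =
      ewens_falling \<theta> a k (cycle_type {1..n} \<sigma>)" if "\<sigma> permutes {1..n}" for \<sigma>
  proof -
    have "cycles_of n \<sigma> = cycles_on {1..n} \<sigma>" unfolding cycles_of_def cycles_on_def ..
    then have "num_cycles n \<sigma> = size (cycle_type {1..n} \<sigma>)"
      and "cyc_count n \<sigma> j = count (cycle_type {1..n} \<sigma>) j" for j
      unfolding num_cycles_def cyc_count_def cycle_type_def
      using finite_cycles_on[of "{1..n}" \<sigma>] count_cycle_type[of "{1..n}" \<sigma>] by (simp_all add: cycle_type_def)
    moreover have "real (\<Sum>j=1..n. a j * count (cycle_type {1..n} \<sigma>) j) = cycle_sum a (cycle_type {1..n} \<sigma>)"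
      using sum_count_eq_cycle_sum[OF _ set_cycle_type_subset[OF that]] by simp
    ultimately show ?thesis unfolding ewens_falling_def by simp
  qed
  then have "(\<Sum>\<sigma>\<in>{\<sigma>. \<sigma> permutes {1..n}}. \<theta> ^ num_cycles n \<sigma> * falling (real (\<Sum>j=1..n. a j * cyc_count n \<sigma> j)) k)
      = cycle_type_sum n (ewens_falling \<theta> a k)"
    unfolding cycle_type_sum_def by (intro sum.cong) auto
  then show ?thesis unfolding ewens_E_def by simp
qed

section \<open>The exact expansion\<close>

definition comp_binom :: "nat \<Rightarrow> nat list \<Rightarrow> real" where
  "comp_binom k r = real (\<Prod>i<length r. (k - sum_list (take i r) - 1) choose (r ! i - 1))"

definition comp_falling :: "(nat \<Rightarrow> nat) \<Rightarrow> nat list \<Rightarrow> nat list \<Rightarrow> real" where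
  "comp_falling a r js = (\<Prod>i<length r. falling (real (a (js ! i))) (r ! i) / real (js ! i))"

definition index_tuples_le :: "nat \<Rightarrow> nat \<Rightarrow> nat list set" where
  "index_tuples_le n u = {js. length js = u \<and> (\<forall>x\<in>set js. 1 \<le> x) \<and> sum_list js \<le> n}"

definition poch_frac :: "real \<Rightarrow> nat \<Rightarrow> real" where
  "poch_frac \<theta> i = pochhammer \<theta> i / fact i"

definition expansion_term :: "real \<Rightarrow> (nat \<Rightarrow> nat) \<Rightarrow> nat \<Rightarrow> nat \<Rightarrow> nat \<Rightarrow> real" where
  "expansion_term \<theta> a n k u = \<theta> ^ u * (\<Sum>r\<in>compositions k u. comp_binom k r *
       (\<Sum>js\<in>index_tuples_le n u. comp_falling a r js * poch_frac \<theta> (n - sum_list js)))"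

lemma comp_binom_Nil [simp]: "comp_binom k [] = 1"
  unfolding comp_binom_def by simp

lemma comp_binom_Cons: "comp_binom k (r0 # rs) = real ((k - 1) choose (r0 - 1)) * comp_binom (k - r0) rs"
  unfolding comp_binom_def by (simp add: prod.lessThan_Suc_shift del: prod.lessThan_Suc)

lemma comp_binom_nonneg: "0 \<le> comp_binom k r"
  unfolding comp_binom_def by (rule of_nat_0_le_iff)

lemma comp_falling_Nil [simp]: "comp_falling a [] js = 1"
  unfolding comp_falling_def by simp

lemma comp_falling_Cons:
  "comp_falling a (r0 # rs) (j # js) = falling (real (a j)) r0 / real j * comp_falling a rs js"
  unfolding comp_falling_def by (simp add: prod.lessThan_Suc_shift del: prod.lessThan_Suc)

lemma length_le_sum_list: "\<forall>x\<in>set xs. 1 \<le> x \<Longrightarrow> length xs \<le> sum_list xs"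
  by (induction xs) auto

lemma finite_compositions: "finite (compositions k u)"
proof (rule finite_subset)
  show "compositions k u \<subseteq> {xs. set xs \<subseteq> {0..k} \<and> length xs = u}"
    unfolding compositions_def using member_le_sum_list by fastforce
qed (rule finite_lists_length_eq, simp)

lemma finite_index_tuples_le: "finite (index_tuples_le n u)"
proof (rule finite_subset)
  show "index_tuples_le n u \<subseteq> {xs. set xs \<subseteq> {0..n} \<and> length xs = u}"
    unfolding index_tuples_le_def using member_le_sum_list by fastforce
qed (rule finite_lists_length_eq, simp)

lemma compositions_eq_empty: "k < u \<Longrightarrow> compositions k u = {}"
  unfolding compositions_def using length_le_sum_list by fastforce

lemma compositions_0_right: "compositions k 0 = (if k = 0 then {[]} else {})"
  unfolding compositions_def by auto

lemma index_tuples_le_0_right [simp]: "index_tuples_le n 0 = {[]}"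
  unfolding index_tuples_le_def by auto

lemma compositions_Suc:
  "compositions k (Suc u) = (\<lambda>(r0, rs). r0 # rs) ` (SIGMA r0:{1..k}. compositions (k - r0) u)"
proof (intro set_eqI iffI)
  fix r assume "r \<in> compositions k (Suc u)"
  then obtain r0 rs where "r = r0 # rs" "(r0, rs) \<in> (SIGMA r0:{1..k}. compositions (k - r0) u)"
    unfolding compositions_def by (cases r) auto
  then show "r \<in> (\<lambda>(r0, rs). r0 # rs) ` (SIGMA r0:{1..k}. compositions (k - r0) u)" by force
qed (auto simp: compositions_def)

lemma index_tuples_le_Suc:
  "index_tuples_le n (Suc u) = (\<lambda>(j, js). j # js) ` (SIGMA j:{1..n}. index_tuples_le (n - j) u)"
proof (intro set_eqI iffI)
  fix js assume "js \<in> index_tuples_le n (Suc u)"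
  then obtain j js' where "js = j # js'" "(j, js') \<in> (SIGMA j:{1..n}. index_tuples_le (n - j) u)"
    unfolding index_tuples_le_def by (cases js) auto
  then show "js \<in> (\<lambda>(j, js). j # js) ` (SIGMA j:{1..n}. index_tuples_le (n - j) u)" by force
qed (auto simp: index_tuples_le_def)

lemma sum_Cons_Sigma:
  assumes "finite A" "\<And>x. finite (B x)"
  shows "(\<Sum>xs\<in>(\<lambda>(x, xs). x # xs) ` Sigma A B. G xs) = (\<Sum>x\<in>A. \<Sum>xs\<in>B x. G (x # xs))"
proof -
  have "inj_on (\<lambda>(x, xs). x # xs) (Sigma A B)" by (auto simp: inj_on_def)
  then show ?thesis
    using sum.Sigma[OF assms(1), of B "\<lambda>x xs. G (x # xs)"] assms(2)
    by (simp add: sum.reindex comp_def case_prod_unfold)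
qed

lemma sum_compositions_Suc:
  "(\<Sum>r\<in>compositions k (Suc u). G r) = (\<Sum>r0=1..k. \<Sum>rs\<in>compositions (k - r0) u. G (r0 # rs))"
  unfolding compositions_Suc by (rule sum_Cons_Sigma) (simp_all add: finite_compositions)

lemma sum_index_tuples_le_Suc:
  "(\<Sum>js\<in>index_tuples_le n (Suc u). G js) = (\<Sum>j=1..n. \<Sum>js\<in>index_tuples_le (n - j) u. G (j # js))"
  unfolding index_tuples_le_Suc by (rule sum_Cons_Sigma) (simp_all add: finite_index_tuples_le)

lemma expansion_term_Suc:
  "expansion_term \<theta> a n k (Suc u) = (\<Sum>r0=1..k. \<Sum>j=1..n.
     \<theta> * real ((k - 1) choose (r0 - 1)) * falling (real (a j)) r0 / real j * expansion_term \<theta> a (n - j) (k - r0) u)"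
proof -
  have "expansion_term \<theta> a n k (Suc u) =
    (\<Sum>r0=1..k. \<Sum>rs\<in>compositions (k - r0) u. \<Sum>j=1..n. \<Sum>js\<in>index_tuples_le (n - j) u.
      \<theta> ^ Suc u * (real ((k - 1) choose (r0 - 1)) * comp_binom (k - r0) rs *
        (falling (real (a j)) r0 / real j * comp_falling a rs js * poch_frac \<theta> (n - j - sum_list js))))"
    unfolding expansion_term_def sum_compositions_Suc sum_index_tuples_le_Suc comp_binom_Cons comp_falling_Cons
    by (simp add: sum_distrib_left diff_diff_left)
  also have "\<dots> = (\<Sum>r0=1..k. \<Sum>j=1..n. \<Sum>rs\<in>compositions (k - r0) u. \<Sum>js\<in>index_tuples_le (n - j) u.
      \<theta> ^ Suc u * (real ((k - 1) choose (r0 - 1)) * comp_binom (k - r0) rs *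
        (falling (real (a j)) r0 / real j * comp_falling a rs js * poch_frac \<theta> (n - j - sum_list js))))"
    by (rule sum.cong[OF refl]) (rule sum.swap)
  finally show ?thesis
    unfolding expansion_term_def by (simp add: sum_distrib_left algebra_simps)
qed

lemma expansion_term_eq_0: "k < u \<or> (u = 0 \<and> 0 < k) \<Longrightarrow> expansion_term \<theta> a n k u = 0"
  unfolding expansion_term_def by (auto simp: compositions_eq_empty compositions_0_right)

lemma sum_expansion_term_extend:
  "k \<le> U \<Longrightarrow> (\<Sum>u\<le>U. expansion_term \<theta> a n k u) = (\<Sum>u\<le>k. expansion_term \<theta> a n k u)"
  by (rule sum.mono_neutral_right) (auto simp: expansion_term_eq_0)

lemma scaled_moment_eq_expansion:
  "scaled_moment \<theta> a n k = (\<Sum>u\<le>k. expansion_term \<theta> a n k u)"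
proof (induction k arbitrary: n rule: less_induct)
  case (less k)
  show ?case
  proof (cases k)
    case 0
    then show ?thesis
      by (simp add: scaled_moment_0 expansion_term_def compositions_0_right poch_frac_def)
  next
    case (Suc K)
    let ?c = "\<lambda>j r. \<theta> * real (K choose (r - 1)) * falling (real (a j)) r / real j"
    have IH: "scaled_moment \<theta> a (n - j) (Suc K - r) = (\<Sum>u\<le>K. expansion_term \<theta> a (n - j) (Suc K - r) u)"
      if "r \<in> {1..Suc K}" for j r
      using that less.IH[of "Suc K - r"] sum_expansion_term_extend[of "Suc K - r" K] Suc by auto
    have "scaled_moment \<theta> a n k = (\<Sum>j=1..n. \<Sum>r=1..Suc K. ?c j r * scaled_moment \<theta> a (n - j) (Suc K - r))"
      unfolding Suc by (rule scaled_moment_Suc)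
    also have "\<dots> = (\<Sum>j=1..n. \<Sum>r=1..Suc K. \<Sum>u\<le>K. ?c j r * expansion_term \<theta> a (n - j) (Suc K - r) u)"
      by (intro sum.cong refl) (simp add: IH sum_distrib_left)
    also have "\<dots> = (\<Sum>u\<le>K. \<Sum>r=1..Suc K. \<Sum>j=1..n. ?c j r * expansion_term \<theta> a (n - j) (Suc K - r) u)"
      by (subst sum.swap, subst (1 2) sum.swap) (rule refl)
    also have "\<dots> = (\<Sum>u\<le>K. expansion_term \<theta> a n (Suc K) (Suc u))"
      by (simp add: expansion_term_Suc)
    also have "\<dots> = (\<Sum>u\<le>Suc K. expansion_term \<theta> a n (Suc K) u)"
      using sum.atMost_Suc_shift[of "expansion_term \<theta> a n (Suc K)" K] expansion_term_eq_0[of "Suc K" 0]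
      by simp
    finally show ?thesis unfolding Suc .
  qed
qed

section \<open>Sums of inverse products\<close>

lemma harm_le_one_plus_ln: "0 < n \<Longrightarrow> harm n \<le> 1 + ln (real n)"
  using euler_mascheroni_sequence_decreasing[of 1 n] by (simp add: harm_def)

lemma sum_inverse_mult_diff_le:
  assumes "1 \<le> n"
  shows "(\<Sum>J=1..n-1. 1 / (real J * real (n - J))) \<le> 2 * (1 + ln (real n)) / real n"
proof -
  have "(\<Sum>J=1..n-1. 1 / real (n - J)) = (\<Sum>J=1..n-1. 1 / real (n - (n - 1 + 1 - J)))"
    by (rule sum.atLeastAtMost_rev)
  also have "\<dots> = (\<Sum>J=1..n-1. 1 / real J)"
    using assms by (intro sum.cong refl) auto
  finally have rev: "(\<Sum>J=1..n-1. 1 / real (n - J)) = (\<Sum>J=1..n-1. 1 / real J)" .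
  have "(\<Sum>J=1..n-1. 1 / (real J * real (n - J))) = (\<Sum>J=1..n-1. 1 / real J + 1 / real (n - J)) / real n"
    unfolding sum_divide_distrib by (intro sum.cong refl) (auto simp: of_nat_diff field_simps)
  also have "\<dots> = 2 * harm (n - 1) / real n"
    unfolding sum.distrib rev by (simp add: harm_def inverse_eq_divide)
  also have "\<dots> \<le> 2 * (1 + ln (real n)) / real n"
  proof -
    have "harm (n - 1) \<le> (harm n :: real)" by (rule harm_mono) simp
    also have "\<dots> \<le> 1 + ln (real n)" using assms by (intro harm_le_one_plus_ln) simp
    finally have "harm (n - 1) \<le> 1 + ln (real n)" .
    then show ?thesis by (intro divide_right_mono) auto
  qed
  finally show ?thesis .
qed

definition inv_prod :: "nat list \<Rightarrow> real" where
  "inv_prod js = (\<Prod>i<length js. 1 / real (js ! i))"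

definition harmonic_conv :: "nat \<Rightarrow> nat \<Rightarrow> real" where
  "harmonic_conv u J = (\<Sum>js\<in>compositions J u. inv_prod js)"

lemma inv_prod_Cons: "inv_prod (j # js) = 1 / real j * inv_prod js"
  unfolding inv_prod_def by (simp add: prod.lessThan_Suc_shift del: prod.lessThan_Suc)

lemma inv_prod_nonneg: "0 \<le> inv_prod js"
  unfolding inv_prod_def by (rule prod_nonneg) simp

lemma harmonic_conv_nonneg: "0 \<le> harmonic_conv u J"
  unfolding harmonic_conv_def by (rule sum_nonneg) (rule inv_prod_nonneg)

lemma harmonic_conv_Suc: "harmonic_conv (Suc u) J = (\<Sum>j=1..J. 1 / real j * harmonic_conv u (J - j))"
  unfolding harmonic_conv_def sum_compositions_Suc inv_prod_Cons sum_distrib_left ..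

lemma harmonic_conv_0: "harmonic_conv 0 J = (if J = 0 then 1 else 0)"
  unfolding harmonic_conv_def compositions_0_right by (simp add: inv_prod_def)

lemma harmonic_conv_0_right: "1 \<le> u \<Longrightarrow> harmonic_conv u 0 = 0"
  unfolding harmonic_conv_def by (simp add: compositions_eq_empty)

lemma harmonic_conv_le:
  assumes "1 \<le> u" "1 \<le> J" "J \<le> N"
  shows "harmonic_conv u J \<le> 2 ^ (u - 1) * (1 + ln (real N)) ^ (u - 1) / real J"
  using assms
proof (induction u arbitrary: J rule: dec_induct)
  case base
  have "harmonic_conv 1 J = (\<Sum>j=1..J. 1 / real j * harmonic_conv 0 (J - j))"
    using harmonic_conv_Suc[of 0 J] by simp
  also have "\<dots> = (\<Sum>j=1..J. if j = J then 1 / real J else 0)"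
    by (intro sum.cong refl) (auto simp: harmonic_conv_0)
  finally show ?case using base by simp
next
  case (step u)
  let ?L = "1 + ln (real N)"
  have L: "1 + ln (real J) \<le> ?L" using step.prems by simp
  have "harmonic_conv (Suc u) J = (\<Sum>j=1..J-1. 1 / real j * harmonic_conv u (J - j))"
  proof -
    have "{1..J} = insert J {1..J-1}" "J \<notin> {1..J-1}" using step.prems by auto
    then show ?thesis unfolding harmonic_conv_Suc using harmonic_conv_0_right[OF step.hyps(1)] by simp
  qed
  also have "\<dots> \<le> (\<Sum>j=1..J-1. 2 ^ (u - 1) * ?L ^ (u - 1) * (1 / (real j * real (J - j))))"
  proof (rule sum_mono)
    fix j assume j: "j \<in> {1..J-1}"
    then have "harmonic_conv u (J - j) \<le> 2 ^ (u - 1) * ?L ^ (u - 1) / real (J - j)"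
      using step.prems by (intro step.IH) auto
    then show "1 / real j * harmonic_conv u (J - j) \<le> 2 ^ (u - 1) * ?L ^ (u - 1) * (1 / (real j * real (J - j)))"
      using j by (simp add: field_simps)
  qed
  also have "\<dots> \<le> 2 ^ (u - 1) * ?L ^ (u - 1) * (2 * ?L / real J)"
    unfolding sum_distrib_left[symmetric] using step.prems L
    by (intro mult_left_mono order_trans[OF sum_inverse_mult_diff_le] divide_right_mono) auto
  also have "\<dots> = 2 ^ (Suc u - 1) * ?L ^ (Suc u - 1) / real J"
    using step.hyps(1) by (cases u) (auto simp: field_simps)
  finally show ?case .
qed

lemma sum_index_tuples_le_by_sum:
  "(\<Sum>js\<in>index_tuples_le n u. g (sum_list js) * inv_prod js) = (\<Sum>J=0..n. g J * harmonic_conv u J)"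
proof -
  have "(\<Sum>js\<in>index_tuples_le n u. g (sum_list js) * inv_prod js) =
      (\<Sum>J=0..n. \<Sum>js\<in>{x \<in> index_tuples_le n u. sum_list x = J}. g (sum_list js) * inv_prod js)"
    by (rule sum.group[symmetric]) (simp_all add: finite_index_tuples_le, auto simp: index_tuples_le_def)
  also have "\<dots> = (\<Sum>J=0..n. g J * harmonic_conv u J)"
  proof (rule sum.cong[OF refl])
    fix J assume "J \<in> {0..n}"
    then have "{x \<in> index_tuples_le n u. sum_list x = J} = compositions J u"
      unfolding index_tuples_le_def compositions_def by auto
    then show "(\<Sum>js\<in>{x \<in> index_tuples_le n u. sum_list x = J}. g (sum_list js) * inv_prod js) = g J * harmonic_conv u J"
      unfolding harmonic_conv_def sum_distrib_left by (intro sum.cong) (auto simp: compositions_def)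
  qed
  finally show ?thesis .
qed

section \<open>Ratios of rising factorials\<close>

lemma poch_frac_pos: "0 < \<theta> \<Longrightarrow> 0 < poch_frac \<theta> i"
  unfolding poch_frac_def by (simp add: pochhammer_pos)

lemma poch_frac_Suc: "poch_frac \<theta> (Suc i) = poch_frac \<theta> i * ((\<theta> + real i) / (real i + 1))"
  unfolding poch_frac_def pochhammer_Suc by (simp add: field_simps)

lemma abs_minus_ln_one_plus_le:
  fixes t :: real
  assumes "- 1 / 2 \<le> t"
  shows "\<bar>t - ln (1 + t)\<bar> \<le> 2 * t\<^sup>2"
proof -
  have p: "1 + t > 0" using assms by simp
  have "ln (1 + t) \<le> t" using ln_le_minus_one[OF p] by simp
  moreover have "- ln (1 + t) \<le> 1 / (1 + t) - 1"
    using ln_le_minus_one[of "1 / (1 + t)"] p by (simp add: ln_div)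
  then have "t - ln (1 + t) \<le> t\<^sup>2 / (1 + t)"
    using p by (simp add: field_simps power2_eq_square)
  moreover have "t\<^sup>2 / (1 + t) \<le> t\<^sup>2 / (1 / 2)"
    using assms by (intro divide_left_mono) auto
  ultimately show ?thesis by simp
qed

text \<open>Since \<open>poch_frac \<theta> i = \<Gamma>(\<theta> + i) / (\<Gamma>(\<theta>) \<Gamma>(i + 1)) \<sim> i powr (\<theta> - 1) / \<Gamma>(\<theta>)\<close>, the
  following logarithmic error term converges, at rate \<open>1 / i\<close>; only the rate is used.\<close>

definition poch_log_error :: "real \<Rightarrow> nat \<Rightarrow> real" where
  "poch_log_error \<theta> i = ln (poch_frac \<theta> i) - (\<theta> - 1) * ln (real i)"

lemma poch_log_error_step:
  assumes "0 < \<theta>" "1 \<le> i"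
  shows "\<bar>poch_log_error \<theta> (Suc i) - poch_log_error \<theta> i\<bar> \<le> (3 * \<bar>\<theta> - 1\<bar> + 2 * (\<theta> - 1)\<^sup>2) / (real i)\<^sup>2"
proof -
  define y z where "y = (\<theta> - 1) / (real i + 1)" and "z = 1 / real i"
  have i: "real i \<ge> 1" using assms by simp
  have y: "1 + y = (\<theta> + real i) / (real i + 1)" "- 1 / 2 \<le> y"
    using assms i by (simp_all add: y_def field_simps)
  have z: "real (Suc i) = real i * (1 + z)" "0 < z" "z \<le> 1"
    using i by (simp_all add: z_def field_simps)
  have "ln (poch_frac \<theta> (Suc i)) = ln (poch_frac \<theta> i) + ln (1 + y)"
    unfolding poch_frac_Suc y(1)[symmetric] using poch_frac_pos[OF assms(1), of i] y(2) by (simp add: ln_mult)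
  moreover have "ln (real (Suc i)) = ln (real i) + ln (1 + z)"
    unfolding z(1) using i z(2) by (simp add: ln_mult)
  ultimately have "poch_log_error \<theta> (Suc i) - poch_log_error \<theta> i = ln (1 + y) - (\<theta> - 1) * ln (1 + z)"
    unfolding poch_log_error_def by (simp add: algebra_simps)
  also have "\<dots> = (y - (\<theta> - 1) * z) - (y - ln (1 + y)) + (\<theta> - 1) * (z - ln (1 + z))"
    by (simp add: algebra_simps)
  finally have "\<bar>poch_log_error \<theta> (Suc i) - poch_log_error \<theta> i\<bar>
      = \<bar>(y - (\<theta> - 1) * z) - (y - ln (1 + y)) + (\<theta> - 1) * (z - ln (1 + z))\<bar>"
    by simp
  also have "\<dots> \<le> \<bar>y - (\<theta> - 1) * z\<bar> + \<bar>y - ln (1 + y)\<bar> + \<bar>\<theta> - 1\<bar> * \<bar>z - ln (1 + z)\<bar>"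
    unfolding abs_mult[symmetric] by arith
  also have "\<dots> \<le> \<bar>\<theta> - 1\<bar> / (real i)\<^sup>2 + 2 * y\<^sup>2 + \<bar>\<theta> - 1\<bar> * (2 * z\<^sup>2)"
  proof (intro add_mono mult_left_mono abs_minus_ln_one_plus_le)
    have "\<bar>y - (\<theta> - 1) * z\<bar> = \<bar>\<theta> - 1\<bar> / (real i * (real i + 1))"
      using i by (simp add: y_def z_def field_simps abs_div abs_minus_commute)
    also have "\<dots> \<le> \<bar>\<theta> - 1\<bar> / (real i)\<^sup>2"
      using i by (intro divide_left_mono) (auto simp: power2_eq_square)
    finally show "\<bar>y - (\<theta> - 1) * z\<bar> \<le> \<bar>\<theta> - 1\<bar> / (real i)\<^sup>2" .
  qed (use y z in auto)
  also have "2 * y\<^sup>2 \<le> 2 * (\<theta> - 1)\<^sup>2 / (real i)\<^sup>2"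
    using i by (auto simp: y_def power_divide intro!: divide_left_mono power_mono)
  finally show ?thesis
    by (simp add: z_def power_divide add_divide_distrib)
qed

lemma poch_log_error_cauchy:
  assumes "0 < \<theta>"
  obtains c where "0 \<le> c" "\<And>i n. 1 \<le> i \<Longrightarrow> i \<le> n \<Longrightarrow> \<bar>poch_log_error \<theta> i - poch_log_error \<theta> n\<bar> \<le> c / real i"
proof -
  define c where "c = 3 * \<bar>\<theta> - 1\<bar> + 2 * (\<theta> - 1)\<^sup>2"
  have c: "0 \<le> c" by (simp add: c_def)
  have telescoped: "\<bar>poch_log_error \<theta> i - poch_log_error \<theta> n\<bar> \<le> 2 * c / real i - 2 * c / real n"
    if "1 \<le> i" "i \<le> n" for i n
    using that(2)
  proof (induction n rule: dec_induct)
    case (step n)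
    have n: "real n \<ge> 1" using step.hyps that(1) by simp
    have "2 * (1 / real n - 1 / real (Suc n)) = 1 / (real n * (real n + 1) / 2)"
      using n by (simp add: field_simps)
    moreover have "1 / (real n)\<^sup>2 \<le> 1 / (real n * (real n + 1) / 2)"
      using n by (intro frac_le) (auto simp: power2_eq_square)
    ultimately have "c * (1 / (real n)\<^sup>2) \<le> c * (2 * (1 / real n - 1 / real (Suc n)))"
      using c by (intro mult_left_mono) auto
    then have "c / (real n)\<^sup>2 \<le> 2 * c / real n - 2 * c / real (Suc n)"
      by (simp add: algebra_simps)
    then show ?case
      using step.IH poch_log_error_step[OF assms, of n] n unfolding c_def[symmetric] by linarith
  qed simp
  have "\<bar>poch_log_error \<theta> i - poch_log_error \<theta> n\<bar> \<le> 2 * c / real i" if "1 \<le> i" "i \<le> n" for i n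
  proof -
    have "0 \<le> 2 * c / real n" using c by simp
    with telescoped[OF that] show ?thesis by linarith
  qed
  with c show ?thesis by (intro that[of "2 * c"]) auto
qed

lemma poch_frac_eq_exp:
  assumes "0 < \<theta>" "1 \<le> i"
  shows "poch_frac \<theta> i = exp (poch_log_error \<theta> i) * real i powr (\<theta> - 1)"
  using assms poch_frac_pos[OF assms(1), of i]
  by (simp add: poch_log_error_def powr_def exp_diff)

lemma abs_exp_minus_one_le: fixes x :: real shows "\<bar>exp x - 1\<bar> \<le> \<bar>x\<bar> * exp \<bar>x\<bar>"
proof (cases "x \<ge> 0")
  case True
  have "1 - x \<le> exp (- x)" using exp_ge_add_one_self[of "-x"] by simp
  then have "(1 - x) * exp x \<le> exp (- x) * exp x" by (intro mult_right_mono) auto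
  then show ?thesis using True by (simp add: algebra_simps exp_minus_inverse)
next
  case False
  have "1 - exp x \<le> - x" using exp_ge_add_one_self[of x] by linarith
  also have "- x \<le> (- x) * exp (- x)" using False mult_left_mono[of 1 "exp (- x)" "- x"] by simp
  finally show ?thesis using False by simp
qed

lemma poch_frac_ratio_approx:
  assumes "0 < \<theta>"
  obtains C where "0 \<le> C" "\<And>i n. 1 \<le> i \<Longrightarrow> i \<le> n \<Longrightarrow>
    \<bar>poch_frac \<theta> i / poch_frac \<theta> n - (real i / real n) powr (\<theta> - 1)\<bar> \<le> C * (real i / real n) powr (\<theta> - 1) / real i"
proof -
  obtain c where c: "0 \<le> c" "\<And>i n. 1 \<le> i \<Longrightarrow> i \<le> n \<Longrightarrow> \<bar>poch_log_error \<theta> i - poch_log_error \<theta> n\<bar> \<le> c / real i"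
    using poch_log_error_cauchy[OF assms] by blast
  have "\<bar>poch_frac \<theta> i / poch_frac \<theta> n - (real i / real n) powr (\<theta> - 1)\<bar>
      \<le> c * exp c * (real i / real n) powr (\<theta> - 1) / real i" if "1 \<le> i" "i \<le> n" for i n
  proof -
    define x where "x = poch_log_error \<theta> i - poch_log_error \<theta> n"
    have x: "\<bar>x\<bar> \<le> c / real i" "\<bar>x\<bar> \<le> c"
      using c(2)[OF that] c(1) that order_trans[OF _ divide_left_mono[of 1 "real i" c]]
      unfolding x_def by auto
    have "poch_frac \<theta> i / poch_frac \<theta> n = exp x * (real i / real n) powr (\<theta> - 1)"
      using that unfolding x_def poch_frac_eq_exp[OF assms that(1)] poch_frac_eq_exp[OF assms order_trans[OF that]]
      by (simp add: exp_diff powr_divide)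
    moreover have "exp x * (real i / real n) powr (\<theta> - 1) - (real i / real n) powr (\<theta> - 1)
        = (exp x - 1) * (real i / real n) powr (\<theta> - 1)"
      by (simp add: algebra_simps)
    ultimately have "\<bar>poch_frac \<theta> i / poch_frac \<theta> n - (real i / real n) powr (\<theta> - 1)\<bar>
        = \<bar>exp x - 1\<bar> * (real i / real n) powr (\<theta> - 1)"
      by (simp add: abs_mult)
    also have "\<bar>exp x - 1\<bar> \<le> c / real i * exp c"
      using abs_exp_minus_one_le[of x] x c(1) by (meson order_trans exp_le_cancel_iff mult_mono abs_ge_zero exp_ge_zero)
    finally show ?thesis by (simp add: mult_right_mono mult.commute)
  qed
  with c(1) show ?thesis by (intro that[of "c * exp c"]) auto
qed

lemma inverse_poch_frac_le:
  assumes "0 < \<theta>"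
  obtains C where "0 \<le> C" "\<And>n. 1 \<le> n \<Longrightarrow> 1 / poch_frac \<theta> n \<le> C * real n powr (1 - \<theta>)"
proof -
  obtain c where c: "0 \<le> c" "\<And>i n. 1 \<le> i \<Longrightarrow> i \<le> n \<Longrightarrow> \<bar>poch_log_error \<theta> i - poch_log_error \<theta> n\<bar> \<le> c / real i"
    using poch_log_error_cauchy[OF assms] by blast
  have "1 / poch_frac \<theta> n \<le> exp c / \<theta> * real n powr (1 - \<theta>)" if "1 \<le> n" for n
  proof -
    have "poch_log_error \<theta> 1 = ln \<theta>" by (simp add: poch_log_error_def poch_frac_def)
    then have "exp (- poch_log_error \<theta> n) \<le> exp (c - ln \<theta>)" using c(2)[of 1 n] that by simp
    also have "\<dots> = exp c / \<theta>" using assms by (simp add: exp_diff)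
    finally have "exp (- poch_log_error \<theta> n) \<le> exp c / \<theta>" .
    moreover have "1 / poch_frac \<theta> n = exp (- poch_log_error \<theta> n) * real n powr (1 - \<theta>)"
      using powr_minus_divide[of "real n" "\<theta> - 1"]
      unfolding poch_frac_eq_exp[OF assms that] by (simp add: exp_minus field_simps)
    ultimately show ?thesis by (metis mult_right_mono powr_ge_zero times_divide_eq_left)
  qed
  with c(1) assms show ?thesis by (intro that[of "exp c / \<theta>"]) auto
qed

section \<open>The error estimate\<close>

definition poch_ratio_error :: "real \<Rightarrow> nat \<Rightarrow> nat \<Rightarrow> real" where
  "poch_ratio_error \<theta> n J = poch_frac \<theta> (n - J) / poch_frac \<theta> n
     - (if J < n then (1 - real J / real n) powr (\<theta> - 1) else 0)"

lemma ratio_powr_le: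
  assumes "1 \<le> i" "i \<le> n"
  shows "(real i / real n) powr (\<theta> - 1) \<le> real n powr (1 - min 1 \<theta>)"
proof (cases "\<theta> \<ge> 1")
  case True
  then have "(real i / real n) powr (\<theta> - 1) \<le> 1"
    using assms by (intro powr_le1) (auto simp: field_simps)
  then show ?thesis using True by simp
next
  case False
  have "(real i / real n) powr (\<theta> - 1) = 1 / (real i / real n) powr (1 - \<theta>)"
    using powr_minus_divide[of "real i / real n" "1 - \<theta>"] by simp
  also have "\<dots> = (real n / real i) powr (1 - \<theta>)"
    using assms by (simp add: powr_divide)
  also have "\<dots> \<le> real n powr (1 - \<theta>)"
    using False assms by (intro powr_mono2) (auto simp: divide_le_eq)
  finally show ?thesis using False by simp
qed

lemma abs_poch_ratio_error_le:
  assumes "0 < \<theta>"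
  obtains C where "0 \<le> C" "\<And>n J. 1 \<le> J \<Longrightarrow> J \<le> n \<Longrightarrow>
    \<bar>poch_ratio_error \<theta> n J\<bar> \<le> C * real n powr (1 - min 1 \<theta>) / real (max 1 (n - J))"
proof -
  obtain C1 where C1: "0 \<le> C1" "\<And>i n. 1 \<le> i \<Longrightarrow> i \<le> n \<Longrightarrow>
    \<bar>poch_frac \<theta> i / poch_frac \<theta> n - (real i / real n) powr (\<theta> - 1)\<bar> \<le> C1 * (real i / real n) powr (\<theta> - 1) / real i"
    using poch_frac_ratio_approx[OF assms] by blast
  obtain C2 where C2: "0 \<le> C2" "\<And>n. 1 \<le> n \<Longrightarrow> 1 / poch_frac \<theta> n \<le> C2 * real n powr (1 - \<theta>)"
    using inverse_poch_frac_le[OF assms] by blast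
  have "\<bar>poch_ratio_error \<theta> n J\<bar> \<le> (C1 + C2) * real n powr (1 - min 1 \<theta>) / real (max 1 (n - J))"
    if J: "1 \<le> J" "J \<le> n" for n J
  proof (cases "J < n")
    case True
    then have i: "1 \<le> n - J" "n - J \<le> n" and "1 - real J / real n = real (n - J) / real n"
      using J by (auto simp: field_simps)
    then have "\<bar>poch_ratio_error \<theta> n J\<bar> \<le> C1 * (real (n - J) / real n) powr (\<theta> - 1) / real (n - J)"
      using C1(2)[OF i] True unfolding poch_ratio_error_def by simp
    also have "\<dots> \<le> C1 * real n powr (1 - min 1 \<theta>) / real (n - J)"
      using C1(1) by (intro divide_right_mono mult_left_mono ratio_powr_le[OF i]) simp_all
    also have "\<dots> \<le> (C1 + C2) * real n powr (1 - min 1 \<theta>) / real (max 1 (n - J))"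
      using C1(1) C2(1) i by (intro divide_right_mono mult_right_mono frac_le) auto
    finally show ?thesis .
  next
    case False
    then have "J = n" using J by simp
    then have "\<bar>poch_ratio_error \<theta> n J\<bar> = 1 / poch_frac \<theta> n"
      unfolding poch_ratio_error_def using pochhammer_pos[OF assms, of n] by (simp add: poch_frac_def)
    also have "\<dots> \<le> C2 * real n powr (1 - \<theta>)"
      using C2(2) J \<open>J = n\<close> by simp
    also have "\<dots> \<le> C2 * real n powr (1 - min 1 \<theta>)"
      using C2(1) J \<open>J = n\<close> by (intro mult_left_mono powr_mono) auto
    also have "\<dots> \<le> (C1 + C2) * real n powr (1 - min 1 \<theta>) / real (max 1 (n - J))"
      using C1(1) \<open>J = n\<close> by (simp add: mult_right_mono)
    finally show ?thesis .
  qed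
  with C1(1) C2(1) show ?thesis by (intro that[of "C1 + C2"]) auto
qed

lemma sum_inverse_mult_max_le:
  assumes "1 \<le> n"
  shows "(\<Sum>J=1..n. 1 / (real J * real (max 1 (n - J)))) \<le> 3 * (1 + ln (real n)) / real n"
proof -
  have "{1..n} = insert n {1..n-1}" "n \<notin> {1..n-1}" using assms by auto
  moreover have "(\<Sum>J=1..n-1. 1 / (real J * real (max 1 (n - J)))) = (\<Sum>J=1..n-1. 1 / (real J * real (n - J)))"
    by (intro sum.cong refl) (auto simp: max_def)
  ultimately have "(\<Sum>J=1..n. 1 / (real J * real (max 1 (n - J)))) = (\<Sum>J=1..n-1. 1 / (real J * real (n - J))) + 1 / real n"
    by simp
  also have "\<dots> \<le> 2 * (1 + ln (real n)) / real n + (1 + ln (real n)) / real n"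
    using assms by (intro add_mono sum_inverse_mult_diff_le divide_right_mono) auto
  also have "\<dots> = 3 * (1 + ln (real n)) / real n"
    by (simp only: add_divide_distrib[symmetric]) simp
  finally show ?thesis .
qed

lemma sum_poch_ratio_error_le:
  assumes "0 < \<theta>"
  obtains C where "0 \<le> C" "\<And>n u. 1 \<le> n \<Longrightarrow> 1 \<le> u \<Longrightarrow>
    (\<Sum>js\<in>index_tuples_le n u. \<bar>poch_ratio_error \<theta> n (sum_list js)\<bar> * inv_prod js)
      \<le> 2 ^ u * (1 + ln (real n)) ^ u * C / real n powr min 1 \<theta>"
proof -
  obtain C where C: "0 \<le> C" "\<And>n J. 1 \<le> J \<Longrightarrow> J \<le> n \<Longrightarrow>
    \<bar>poch_ratio_error \<theta> n J\<bar> \<le> C * real n powr (1 - min 1 \<theta>) / real (max 1 (n - J))"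
    using abs_poch_ratio_error_le[OF assms] by blast
  have "(\<Sum>js\<in>index_tuples_le n u. \<bar>poch_ratio_error \<theta> n (sum_list js)\<bar> * inv_prod js)
      \<le> 2 ^ u * (1 + ln (real n)) ^ u * (2 * C) / real n powr min 1 \<theta>" if "1 \<le> n" "1 \<le> u" for n u
  proof -
    let ?L = "1 + ln (real n)" and ?P = "real n powr (1 - min 1 \<theta>)"
    have L: "1 \<le> ?L" using that by simp
    have "(\<Sum>js\<in>index_tuples_le n u. \<bar>poch_ratio_error \<theta> n (sum_list js)\<bar> * inv_prod js)
        = (\<Sum>J=1..n. \<bar>poch_ratio_error \<theta> n J\<bar> * harmonic_conv u J)"
      unfolding sum_index_tuples_le_by_sum[where g="\<lambda>J. \<bar>poch_ratio_error \<theta> n J\<bar>"]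
      using harmonic_conv_0_right[OF that(2)] by (simp add: sum.atLeast_Suc_atMost)
    also have "\<dots> \<le> (\<Sum>J=1..n. C * ?P / real (max 1 (n - J)) * (2 ^ (u - 1) * ?L ^ (u - 1) / real J))"
    proof (rule sum_mono)
      fix J assume J: "J \<in> {1..n}"
      have "harmonic_conv u J \<le> 2 ^ (u - 1) * ?L ^ (u - 1) / real J"
        using harmonic_conv_le[OF that(2)] J by simp
      then show "\<bar>poch_ratio_error \<theta> n J\<bar> * harmonic_conv u J \<le> C * ?P / real (max 1 (n - J)) * (2 ^ (u - 1) * ?L ^ (u - 1) / real J)"
        using J C(2)[of J n] by (intro mult_mono) (auto intro: harmonic_conv_nonneg)
    qed
    also have "\<dots> = 2 ^ (u - 1) * ?L ^ (u - 1) * C * ?P * (\<Sum>J=1..n. 1 / (real J * real (max 1 (n - J))))"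
      unfolding sum_distrib_left by (intro sum.cong refl) (simp add: field_simps)
    also have "\<dots> \<le> 2 ^ (u - 1) * ?L ^ (u - 1) * C * ?P * (3 * ?L / real n)"
      using C(1) L by (intro mult_left_mono sum_inverse_mult_max_le that(1)) auto
    also have "\<dots> \<le> 2 ^ u * ?L ^ u * (2 * C) * (?P / real n)"
      using that C(1) L by (cases u) (auto simp: field_simps intro!: mult_right_mono)
    also have "?P / real n = 1 / real n powr min 1 \<theta>"
      using that by (simp add: powr_diff)
    finally show ?thesis by simp
  qed
  with C(1) show ?thesis by (intro that[of "2 * C"]) auto
qed

lemma abs_falling_le:
  assumes "a \<le> m"
  shows "\<bar>falling (real a) r\<bar> \<le> real m ^ r"
proof (cases "r \<le> a")
  case True
  have "\<bar>falling (real a) r\<bar> = (\<Prod>i<r. \<bar>real a - real i\<bar>)"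
    unfolding falling_def by (simp add: abs_prod)
  also have "\<dots> \<le> (\<Prod>i<r. real m)"
    using True assms by (intro prod_mono) auto
  finally show ?thesis by simp
next
  case False
  then have "falling (real a) r = 0" unfolding falling_def by (intro prod_zero) auto
  then show ?thesis by simp
qed

lemma abs_comp_falling_le:
  assumes r: "r \<in> compositions k u" and js: "js \<in> index_tuples_le n u" and a: "\<forall>j\<in>{1..n}. a j \<le> m"
  shows "\<bar>comp_falling a r js\<bar> \<le> real m ^ k * inv_prod js"
proof -
  have lr: "length r = u" "sum_list r = k" using r unfolding compositions_def by auto
  have lj: "length js = u" using js unfolding index_tuples_le_def by auto
  have "js ! i \<in> {1..n}" if "i < u" for i
    using js that lj nth_mem[of i js] member_le_sum_list[of "js ! i" js]
    unfolding index_tuples_le_def by fastforce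
  then have "\<bar>comp_falling a r js\<bar> \<le> (\<Prod>i<u. real m ^ (r ! i) * (1 / real (js ! i)))"
    unfolding comp_falling_def lr(1) abs_prod
    using a abs_falling_le by (intro prod_mono) (auto simp: abs_divide intro: divide_right_mono)
  also have "\<dots> = (\<Prod>i<u. real m ^ (r ! i)) * inv_prod js"
    unfolding inv_prod_def lj prod.distrib ..
  also have "(\<Prod>i<u. real m ^ (r ! i)) = real m ^ k"
  proof -
    have "k = (\<Sum>i<u. r ! i)" using lr by (simp add: sum_list_sum_nth atLeast0LessThan)
    then show ?thesis by (simp add: power_sum)
  qed
  finally show ?thesis .
qed

lemma ewens_E_falling_expansion:
  assumes "0 < \<theta>" "1 \<le> k"
  shows "ewens_E \<theta> n (\<lambda>\<sigma>. falling (real (\<Sum>j=1..n. a j * cyc_count n \<sigma> j)) k) =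
    (\<Sum>u=1..k. \<theta> ^ u * (\<Sum>r\<in>compositions k u. comp_binom k r *
       (\<Sum>js\<in>index_tuples_le n u. comp_falling a r js * (poch_frac \<theta> (n - sum_list js) / poch_frac \<theta> n))))"
proof -
  have "pochhammer \<theta> n = fact n * poch_frac \<theta> n" unfolding poch_frac_def by simp
  then have "ewens_E \<theta> n (\<lambda>\<sigma>. falling (real (\<Sum>j=1..n. a j * cyc_count n \<sigma> j)) k)
      = (\<Sum>u\<le>k. expansion_term \<theta> a n k u) / poch_frac \<theta> n"
    unfolding ewens_E_falling_eq scaled_moment_eq_expansion[symmetric] scaled_moment_def by simp
  also have "(\<Sum>u\<le>k. expansion_term \<theta> a n k u) = (\<Sum>u=1..k. expansion_term \<theta> a n k u)"
    using assms(2) by (intro sum.mono_neutral_right) (auto simp: expansion_term_eq_0)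
  finally show ?thesis
    unfolding expansion_term_def by (simp add: sum_divide_distrib sum_distrib_left)
qed

lemma main_term_eq:
  "main_term \<theta> k a n =
    (\<Sum>u=1..k. \<theta> ^ u * (\<Sum>r\<in>compositions k u. comp_binom k r * (\<Sum>js\<in>index_tuples_le n u. comp_falling a r js *
       (if sum_list js < n then (1 - real (sum_list js) / real n) powr (\<theta> - 1) else 0))))"
proof -
  have "real (\<Prod>i<u. (k - sum_list (take i r) - 1) choose (r ! i - 1)) *
      (\<Sum>js\<in>index_tuples n u. (\<Prod>i<u. falling (real (a (js ! i))) (r ! i) / real (js ! i))
          * (1 - real (sum_list js) / real n) powr (\<theta> - 1))
    = comp_binom k r * (\<Sum>js\<in>index_tuples_le n u. comp_falling a r js
          * (if sum_list js < n then (1 - real (sum_list js) / real n) powr (\<theta> - 1) else 0))"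
    if "r \<in> compositions k u" for r u
  proof -
    have "index_tuples n u = {js \<in> index_tuples_le n u. sum_list js < n}"
      unfolding index_tuples_def index_tuples_le_def by auto
    moreover have "length r = u" using that by (simp add: compositions_def)
    ultimately show ?thesis
      unfolding comp_falling_def comp_binom_def
      by (simp add: sum.inter_filter[OF finite_index_tuples_le] if_distrib[where f="(*) _"] cong: if_cong)
  qed
  then show ?thesis
    unfolding main_term_def by (intro sum.cong refl arg_cong[where f="(*) _"]) blast
qed

lemma ewens_E_minus_main_term:
  assumes "0 < \<theta>" "1 \<le> k"
  shows "ewens_E \<theta> n (\<lambda>\<sigma>. falling (real (\<Sum>j=1..n. a j * cyc_count n \<sigma> j)) k) - main_term \<theta> k a n =
    (\<Sum>u=1..k. \<theta> ^ u * (\<Sum>r\<in>compositions k u. comp_binom k r *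
       (\<Sum>js\<in>index_tuples_le n u. comp_falling a r js * poch_ratio_error \<theta> n (sum_list js))))"
  unfolding ewens_E_falling_expansion[OF assms] main_term_eq poch_ratio_error_def
  by (simp only: sum_subtractf[symmetric] right_diff_distrib[symmetric])

lemma one_plus_ln_power_le:
  assumes "1 \<le> n" "u \<le> k"
  shows "(1 + ln (real n)) ^ u \<le> 2 ^ k * (1 + ln (real n) ^ k)"
proof -
  have x: "0 \<le> ln (real n)" using assms by simp
  have "(1 + ln (real n)) ^ u \<le> (1 + ln (real n)) ^ k"
    using x assms(2) by (intro power_increasing) auto
  also have "\<dots> \<le> (2 * max 1 (ln (real n))) ^ k"
    using x by (intro power_mono) auto
  also have "\<dots> \<le> 2 ^ k * (1 + ln (real n) ^ k)"
    using x by (auto simp: power_mult_distrib max_def)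
  finally show ?thesis .
qed

lemma abs_sum_comp_falling_error_le:
  assumes r: "r \<in> compositions k u" and a: "\<forall>j\<in>{1..n}. a j \<le> m"
  shows "\<bar>\<Sum>js\<in>index_tuples_le n u. comp_falling a r js * poch_ratio_error \<theta> n (sum_list js)\<bar>
    \<le> real m ^ k * (\<Sum>js\<in>index_tuples_le n u. \<bar>poch_ratio_error \<theta> n (sum_list js)\<bar> * inv_prod js)"
  unfolding sum_distrib_left
proof (intro order_trans[OF sum_abs] sum_mono)
  fix js assume "js \<in> index_tuples_le n u"
  then have "\<bar>comp_falling a r js\<bar> * \<bar>poch_ratio_error \<theta> n (sum_list js)\<bar>
      \<le> real m ^ k * inv_prod js * \<bar>poch_ratio_error \<theta> n (sum_list js)\<bar>"
    using abs_comp_falling_le[OF r _ a] by (intro mult_right_mono) auto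
  then show "\<bar>comp_falling a r js * poch_ratio_error \<theta> n (sum_list js)\<bar>
      \<le> real m ^ k * (\<bar>poch_ratio_error \<theta> n (sum_list js)\<bar> * inv_prod js)"
    by (simp add: abs_mult algebra_simps)
qed

lemma abs_ewens_E_minus_main_term_le:
  assumes "0 < \<theta>" "1 \<le> k" and a: "\<forall>j\<in>{1..n}. a j \<le> m"
    and C: "\<And>u. 1 \<le> u \<Longrightarrow> (\<Sum>js\<in>index_tuples_le n u. \<bar>poch_ratio_error \<theta> n (sum_list js)\<bar> * inv_prod js)
      \<le> 2 ^ u * (1 + ln (real n)) ^ u * C / real n powr min 1 \<theta>"
  shows "\<bar>ewens_E \<theta> n (\<lambda>\<sigma>. falling (real (\<Sum>j=1..n. a j * cyc_count n \<sigma> j)) k) - main_term \<theta> k a n\<bar>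
    \<le> (\<Sum>u=1..k. \<theta> ^ u * (\<Sum>r\<in>compositions k u. comp_binom k r) * 2 ^ u * (1 + ln (real n)) ^ u)
        * real m ^ k * C / real n powr min 1 \<theta>"
proof -
  let ?B = "\<lambda>u. real m ^ k * (2 ^ u * (1 + ln (real n)) ^ u * C / real n powr min 1 \<theta>)"
  let ?X = "\<lambda>u r. \<Sum>js\<in>index_tuples_le n u. comp_falling a r js * poch_ratio_error \<theta> n (sum_list js)"
  have "\<bar>\<Sum>r\<in>compositions k u. comp_binom k r * ?X u r\<bar> \<le> (\<Sum>r\<in>compositions k u. comp_binom k r * ?B u)"
    if "u \<in> {1..k}" for u
  proof (intro order_trans[OF sum_abs] sum_mono)
    fix r assume "r \<in> compositions k u"
    then have "\<bar>?X u r\<bar> \<le> real m ^ k * (\<Sum>js\<in>index_tuples_le n u. \<bar>poch_ratio_error \<theta> n (sum_list js)\<bar> * inv_prod js)"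
      by (rule abs_sum_comp_falling_error_le[OF _ a])
    also have "\<dots> \<le> ?B u"
      using that by (intro mult_left_mono C) auto
    finally have "\<bar>?X u r\<bar> \<le> ?B u" .
    then show "\<bar>comp_binom k r * ?X u r\<bar> \<le> comp_binom k r * ?B u"
      unfolding abs_mult abs_of_nonneg[OF comp_binom_nonneg] by (rule mult_left_mono[OF _ comp_binom_nonneg])
  qed
  then have "\<bar>\<Sum>u=1..k. \<theta> ^ u * (\<Sum>r\<in>compositions k u. comp_binom k r * ?X u r)\<bar>
      \<le> (\<Sum>u=1..k. \<theta> ^ u * (\<Sum>r\<in>compositions k u. comp_binom k r * ?B u))"
    using assms(1) by (intro order_trans[OF sum_abs] sum_mono) (simp add: abs_mult mult_left_mono)
  also have "\<dots> = (\<Sum>u=1..k. \<theta> ^ u * (\<Sum>r\<in>compositions k u. comp_binom k r) * 2 ^ u * (1 + ln (real n)) ^ u)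
        * real m ^ k * C / real n powr min 1 \<theta>"
    by (simp add: sum_distrib_left sum_distrib_right sum_divide_distrib algebra_simps)
  finally show ?thesis unfolding ewens_E_minus_main_term[OF assms(1,2)] .
qed

theorem lemma3:
  fixes \<theta> :: real and m k :: nat
  assumes "\<theta> > 0" and "k \<ge> 1"
  shows "\<exists>C. \<forall>n\<ge>1. \<forall>a :: nat \<Rightarrow> nat. (\<forall>j\<in>{1..n}. a j \<le> m) \<longrightarrow>
           \<bar>ewens_E \<theta> n (\<lambda>\<sigma>. falling (real (\<Sum>j=1..n. a j * cyc_count n \<sigma> j)) k)
              - main_term \<theta> k a n\<bar>
           \<le> C * (1 + ln (real n) ^ k) / real n powr min 1 \<theta>"
proof -
  obtain C where C: "0 \<le> C" "\<And>n u. 1 \<le> n \<Longrightarrow> 1 \<le> u \<Longrightarrow>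
      (\<Sum>js\<in>index_tuples_le n u. \<bar>poch_ratio_error \<theta> n (sum_list js)\<bar> * inv_prod js)
        \<le> 2 ^ u * (1 + ln (real n)) ^ u * C / real n powr min 1 \<theta>"
    using sum_poch_ratio_error_le[OF assms(1)] by blast
  let ?S = "\<lambda>u. \<theta> ^ u * (\<Sum>r\<in>compositions k u. comp_binom k r) * 2 ^ u"
  let ?E = "\<lambda>n a. \<bar>ewens_E \<theta> n (\<lambda>\<sigma>. falling (real (\<Sum>j=1..n. a j * cyc_count n \<sigma> j)) k) - main_term \<theta> k a n\<bar>"
  have "?E n a \<le> (\<Sum>u=1..k. ?S u) * 2 ^ k * real m ^ k * C * (1 + ln (real n) ^ k) / real n powr min 1 \<theta>"
    if n: "1 \<le> n" and a: "\<forall>j\<in>{1..n}. a j \<le> m" for n a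
  proof -
    have "?E n a \<le> (\<Sum>u=1..k. ?S u * (1 + ln (real n)) ^ u) * real m ^ k * C / real n powr min 1 \<theta>"
      using n by (intro abs_ewens_E_minus_main_term_le[OF assms a] C(2))
    also have "\<dots> \<le> (\<Sum>u=1..k. ?S u * (2 ^ k * (1 + ln (real n) ^ k))) * real m ^ k * C / real n powr min 1 \<theta>"
      using assms(1) C(1) n
      by (intro divide_right_mono mult_right_mono sum_mono mult_left_mono one_plus_ln_power_le mult_nonneg_nonneg
          sum_nonneg comp_binom_nonneg) auto
    finally show ?thesis unfolding sum_distrib_right[symmetric] by (simp add: mult_ac)
  qed
  then show ?thesis by blast
qed

end
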